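(* Let $\omega\ge2$ and let $\Gamma$ be a finite simple graph that is $\omega$-clique regular and a non-boring $\mathrm{srg}(n,k,\lambda,\mu)$. Then $\Gamma$ and $C_\omega(\Gamma)$ are strongly regular graphs with the same parameters if and only if $k=\omega(\omega-1)$.
   Context: A graph is $\omega$-clique regular if it has a nonempty edge set and every edge lies in exactly one clique of order $\omega$. $C_\omega(\Gamma)$ has as vertices the cliques of order $\omega$ of $\Gamma$, two distinct ones adjacent iff they have nonempty intersection. $\mathrm{srg}(n,k,\lambda,\mu)$: $n$ vertices, $k$-regular, adjacent vertices have $\lambda$ common neighbours, distinct non-adjacent vertices have $\mu$ common neighbours. An srg is boring if it has at most two distinct adjacency eigenvalues, non-boring otherwise. *)

theory Defs
  imports Complex_Main
begin

definition simple_graph :: "'v set \<Rightarrow> ('v \<Rightarrow> 'v \<Rightarrow> bool) \<Rightarrow> bool" where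
  "simple_graph V E \<longleftrightarrow> finite V \<and> (\<forall>x y. E x y \<longrightarrow> x \<in> V \<and> y \<in> V)
     \<and> (\<forall>x y. E x y \<longrightarrow> E y x) \<and> (\<forall>x. \<not> E x x)"

definition clique :: "'v set \<Rightarrow> ('v \<Rightarrow> 'v \<Rightarrow> bool) \<Rightarrow> 'v set \<Rightarrow> bool" where
  "clique V E S \<longleftrightarrow> S \<subseteq> V \<and> (\<forall>x\<in>S. \<forall>y\<in>S. x \<noteq> y \<longrightarrow> E x y)"

definition cliques_of_order :: "'v set \<Rightarrow> ('v \<Rightarrow> 'v \<Rightarrow> bool) \<Rightarrow> nat \<Rightarrow> 'v set set" where
  "cliques_of_order V E w = {S. clique V E S \<and> finite S \<and> card S = w}"

definition clique_regular :: "'v set \<Rightarrow> ('v \<Rightarrow> 'v \<Rightarrow> bool) \<Rightarrow> nat \<Rightarrow> bool" where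
  "clique_regular V E w \<longleftrightarrow> (\<exists>x y. E x y) \<and>
     (\<forall>x y. E x y \<longrightarrow> (\<exists>!S. S \<in> cliques_of_order V E w \<and> x \<in> S \<and> y \<in> S))"

definition clique_graph_vertices :: "'v set \<Rightarrow> ('v \<Rightarrow> 'v \<Rightarrow> bool) \<Rightarrow> nat \<Rightarrow> 'v set set" where
  "clique_graph_vertices V E w = cliques_of_order V E w"

definition clique_graph_adj :: "'v set \<Rightarrow> ('v \<Rightarrow> 'v \<Rightarrow> bool) \<Rightarrow> nat \<Rightarrow> 'v set \<Rightarrow> 'v set \<Rightarrow> bool" where
  "clique_graph_adj V E w S T \<longleftrightarrow> S \<in> cliques_of_order V E w \<and> T \<in> cliques_of_order V E w
     \<and> S \<noteq> T \<and> S \<inter> T \<noteq> {}"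

definition common_nbrs :: "'v set \<Rightarrow> ('v \<Rightarrow> 'v \<Rightarrow> bool) \<Rightarrow> 'v \<Rightarrow> 'v \<Rightarrow> nat" where
  "common_nbrs V E x y = card {z\<in>V. E x z \<and> E y z}"

definition srg :: "'v set \<Rightarrow> ('v \<Rightarrow> 'v \<Rightarrow> bool) \<Rightarrow> nat \<Rightarrow> nat \<Rightarrow> nat \<Rightarrow> nat \<Rightarrow> bool" where
  "srg V E n k l m \<longleftrightarrow> simple_graph V E \<and> card V = n
     \<and> (\<forall>x\<in>V. card {y\<in>V. E x y} = k)
     \<and> (\<forall>x\<in>V. \<forall>y\<in>V. E x y \<longrightarrow> common_nbrs V E x y = l)
     \<and> (\<forall>x\<in>V. \<forall>y\<in>V. x \<noteq> y \<and> \<not> E x y \<longrightarrow> common_nbrs V E x y = m)"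

definition adj_eigenvalue :: "'v set \<Rightarrow> ('v \<Rightarrow> 'v \<Rightarrow> bool) \<Rightarrow> complex \<Rightarrow> bool" where
  "adj_eigenvalue V E \<theta> \<longleftrightarrow> (\<exists>f. (\<forall>x. x \<notin> V \<longrightarrow> f x = 0) \<and> (\<exists>x\<in>V. f x \<noteq> 0) \<and>
     (\<forall>x\<in>V. (\<Sum>y\<in>{y\<in>V. E x y}. f y) = \<theta> * f x))"

definition boring :: "'v set \<Rightarrow> ('v \<Rightarrow> 'v \<Rightarrow> bool) \<Rightarrow> bool" where
  "boring V E \<longleftrightarrow> card {\<theta>. adj_eigenvalue V E \<theta>} \<le> 2"

end

theory Submission
  imports Defs
begin

(* Let N be the vertex-clique incidence matrix of \<Gamma>, and A, B the adjacency matrices of \<Gamma> and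
   C_\<omega>(\<Gamma>). Since every edge lies in exactly one \<omega>-clique, N N^T = A + \<omega> I and N^T N = B + \<omega> I,
   hence N^T A = B N^T. Every vertex lies in k / (\<omega> - 1) cliques, so counting incidences
   C_\<omega>(\<Gamma>) has n k / (\<omega> (\<omega> - 1)) vertices, which gives one direction. Conversely, if
   k = \<omega> (\<omega> - 1) then N is square with all line sums \<omega>, and transporting
   A^2 = (\<lambda> - \<mu>) A + (k - \<mu>) I + \<mu> J along N gives X N^T = 0 for
   X = B^2 - (\<lambda> - \<mu>) B - (k - \<mu>) I - \<mu> J. Writing X = N^T R + a I - \<mu> J and using tr X = 0 and
   X 1 = 0 yields tr (X^2) = 0, so the real symmetric matrix X vanishes. No invertibility of N
   is needed. *)

lemma sum_mult_assoc:
  "(\<Sum>x\<in>I. f x * (\<Sum>y\<in>J. g x y * h y)) = (\<Sum>y\<in>J. (\<Sum>x\<in>I. f x * g x y) * (h y :: 'a :: semiring_0))"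
  by (simp add: sum_distrib_left sum_distrib_right mult.assoc) (rule sum.swap)

definition srg_defect :: "'a set \<Rightarrow> ('a \<Rightarrow> 'a \<Rightarrow> real) \<Rightarrow> real \<Rightarrow> real \<Rightarrow> real \<Rightarrow> 'a \<Rightarrow> 'a \<Rightarrow> real"
  where "srg_defect I P d c m x y = (\<Sum>z\<in>I. P x z * P z y) - d * P x y - c * of_bool (x = y) - m"

lemma sym_matrix_eq_0_if_annihilates:
  fixes X :: "'s \<Rightarrow> 's \<Rightarrow> real" and N R :: "'v \<Rightarrow> 's \<Rightarrow> real"
  assumes "finite L"
    and sym: "\<And>S T. S \<in> L \<Longrightarrow> T \<in> L \<Longrightarrow> X S T = X T S"
    and annihilates: "\<And>S z. S \<in> L \<Longrightarrow> z \<in> V \<Longrightarrow> (\<Sum>U\<in>L. X S U * N z U) = 0"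
    and decomp: "\<And>S T. S \<in> L \<Longrightarrow> T \<in> L \<Longrightarrow> X S T = (\<Sum>z\<in>V. N z S * R z T) + a * of_bool (S = T) - b"
    and trace: "(\<Sum>S\<in>L. X S S) = 0"
    and rows: "\<And>S. S \<in> L \<Longrightarrow> (\<Sum>T\<in>L. X S T) = 0"
    and "S \<in> L" "T \<in> L"
  shows "X S T = 0"
proof -
  have "X S T * X S T = X T S * (\<Sum>z\<in>V. N z S * R z T) + a * (X S T * of_bool (S = T)) - b * X S T"
    if "S \<in> L" "T \<in> L" for S T
  proof -
    have "X S T * X S T = X T S * ((\<Sum>z\<in>V. N z S * R z T) + a * of_bool (S = T) - b)"
      using that by (simp add: sym[of T S] flip: decomp)
    then show ?thesis
      by (simp add: algebra_simps sym[OF that])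
  qed
  then have "(\<Sum>S\<in>L. \<Sum>T\<in>L. X S T * X S T)
      = (\<Sum>S\<in>L. \<Sum>T\<in>L. X T S * (\<Sum>z\<in>V. N z S * R z T)) + a * (\<Sum>S\<in>L. X S S) - b * (\<Sum>S\<in>L. \<Sum>T\<in>L. X S T)"
    using \<open>finite L\<close> by (simp add: sum.distrib sum_subtractf flip: sum_distrib_left)
  also have "(\<Sum>S\<in>L. \<Sum>T\<in>L. X T S * (\<Sum>z\<in>V. N z S * R z T)) = (\<Sum>T\<in>L. \<Sum>z\<in>V. (\<Sum>S\<in>L. X T S * N z S) * R z T)"
    by (subst sum.swap) (simp only: sum_mult_assoc)
  finally have "(\<Sum>S\<in>L. \<Sum>T\<in>L. X S T * X S T) = 0"
    by (simp add: annihilates trace rows)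
  then show ?thesis
    using assms by (simp add: sum_nonneg_eq_0_iff sum_nonneg)
qed

locale gram_pair =
  fixes V :: "'v set" and L :: "'s set" and N :: "'v \<Rightarrow> 's \<Rightarrow> real"
    and A :: "'v \<Rightarrow> 'v \<Rightarrow> real" and B :: "'s \<Rightarrow> 's \<Rightarrow> real" and w :: real
  assumes finite_V: "finite V" and finite_L: "finite L"
    and gram_V: "x \<in> V \<Longrightarrow> y \<in> V \<Longrightarrow> (\<Sum>S\<in>L. N x S * N y S) = A x y + w * of_bool (x = y)"
    and gram_L: "S \<in> L \<Longrightarrow> T \<in> L \<Longrightarrow> (\<Sum>x\<in>V. N x S * N x T) = B S T + w * of_bool (S = T)"
begin

lemma B_sym: "S \<in> L \<Longrightarrow> T \<in> L \<Longrightarrow> B S T = B T S"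
  using gram_L[of S T] gram_L[of T S] by (cases "S = T") (simp_all add: mult.commute)

lemma incidence_intertwines:
  assumes S: "S \<in> L" and z: "z \<in> V"
  shows "(\<Sum>x\<in>V. N x S * A x z) = (\<Sum>U\<in>L. B S U * N z U)"
proof -
  have "(\<Sum>x\<in>V. N x S * A x z) = (\<Sum>x\<in>V. N x S * ((\<Sum>U\<in>L. N x U * N z U) - w * of_bool (x = z)))"
    using z by (intro sum.cong) (simp_all add: gram_V)
  also have "\<dots> = (\<Sum>U\<in>L. (\<Sum>x\<in>V. N x S * N x U) * N z U) - w * N z S"
    using finite_V z
    by (simp add: right_diff_distrib sum_subtractf sum_mult_assoc mult.left_commute[of _ w] flip: sum_distrib_left)
  also have "\<dots> = (\<Sum>U\<in>L. (B S U + w * of_bool (S = U)) * N z U) - w * N z S"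
    using S by (simp add: gram_L)
  also have "\<dots> = (\<Sum>U\<in>L. B S U * N z U)"
    using finite_L S by (simp add: distrib_right sum.distrib mult.assoc flip: sum_distrib_left)
  finally show ?thesis .
qed

lemma incidence_intertwines_square:
  assumes "S \<in> L" "z \<in> V"
  shows "(\<Sum>x\<in>V. N x S * (\<Sum>y\<in>V. A x y * A y z)) = (\<Sum>U\<in>L. (\<Sum>W\<in>L. B S W * B W U) * N z U)"
proof -
  have "(\<Sum>x\<in>V. N x S * (\<Sum>y\<in>V. A x y * A y z)) = (\<Sum>y\<in>V. (\<Sum>x\<in>V. N x S * A x y) * A y z)"
    by (rule sum_mult_assoc)
  also have "\<dots> = (\<Sum>y\<in>V. (\<Sum>W\<in>L. B S W * N y W) * A y z)"
    using assms by (simp add: incidence_intertwines)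
  also have "\<dots> = (\<Sum>W\<in>L. B S W * (\<Sum>y\<in>V. N y W * A y z))"
    by (rule sum_mult_assoc[symmetric])
  also have "\<dots> = (\<Sum>W\<in>L. B S W * (\<Sum>U\<in>L. B W U * N z U))"
    using assms by (simp add: incidence_intertwines)
  also have "\<dots> = (\<Sum>U\<in>L. (\<Sum>W\<in>L. B S W * B W U) * N z U)"
    by (rule sum_mult_assoc)
  finally show ?thesis .
qed

lemma srg_defect_decomposition:
  assumes S: "S \<in> L" and T: "T \<in> L"
  shows "srg_defect L B d c m S T
    = (\<Sum>x\<in>V. N x S * ((\<Sum>z\<in>V. A x z * N z T) - (w + d) * N x T)) + ((w + d) * w - c) * of_bool (S = T) - m"
proof -
  have "(\<Sum>U\<in>L. B S U * B U T) = (\<Sum>U\<in>L. B S U * ((\<Sum>z\<in>V. N z U * N z T) - w * of_bool (U = T)))"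
    using T by (intro sum.cong) (simp_all add: gram_L)
  also have "\<dots> = (\<Sum>z\<in>V. (\<Sum>U\<in>L. B S U * N z U) * N z T) - w * B S T"
    using finite_L T
    by (simp add: right_diff_distrib sum_subtractf sum_mult_assoc mult.left_commute[of _ w] flip: sum_distrib_left)
  also have "\<dots> = (\<Sum>z\<in>V. (\<Sum>x\<in>V. N x S * A x z) * N z T) - w * B S T"
    using S by (simp add: incidence_intertwines)
  also have "\<dots> = (\<Sum>x\<in>V. N x S * (\<Sum>z\<in>V. A x z * N z T)) - w * B S T"
    by (simp only: sum_mult_assoc)
  finally have "(\<Sum>U\<in>L. B S U * B U T) = (\<Sum>x\<in>V. N x S * (\<Sum>z\<in>V. A x z * N z T)) - w * B S T" .
  moreover have "(\<Sum>x\<in>V. N x S * ((\<Sum>z\<in>V. A x z * N z T) - (w + d) * N x T))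
      = (\<Sum>x\<in>V. N x S * (\<Sum>z\<in>V. A x z * N z T)) - (w + d) * (\<Sum>x\<in>V. N x S * N x T)"
    by (simp add: right_diff_distrib sum_subtractf sum_distrib_left mult_ac)
  moreover have "(\<Sum>x\<in>V. N x S * N x T) = B S T + w * of_bool (S = T)"
    using S T by (rule gram_L)
  ultimately show ?thesis
    by (simp add: srg_defect_def algebra_simps)
qed

end

locale regular_gram_pair = gram_pair +
  fixes r :: real
  assumes row_sum_N: "x \<in> V \<Longrightarrow> (\<Sum>S\<in>L. N x S) = r"
    and col_sum_N: "S \<in> L \<Longrightarrow> (\<Sum>x\<in>V. N x S) = r"
begin

lemma row_sum_B:
  assumes S: "S \<in> L"
  shows "(\<Sum>T\<in>L. B S T) = r * r - w"
proof -
  have "(\<Sum>T\<in>L. B S T) = (\<Sum>T\<in>L. (\<Sum>x\<in>V. N x S * N x T) - w * of_bool (S = T))"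
    using S by (intro sum.cong) (simp_all add: gram_L)
  also have "\<dots> = (\<Sum>x\<in>V. N x S * (\<Sum>T\<in>L. N x T)) - w"
    using finite_L S by (simp add: sum_subtractf sum_distrib_left sum.swap[of _ L V])
  also have "\<dots> = r * r - w"
    using S by (simp add: row_sum_N col_sum_N flip: sum_distrib_right)
  finally show ?thesis .
qed

lemma srg_defect_annihilates:
  assumes A_defect: "\<And>x y. x \<in> V \<Longrightarrow> y \<in> V \<Longrightarrow> srg_defect V A d c m x y = 0"
    and S: "S \<in> L" and z: "z \<in> V"
  shows "(\<Sum>U\<in>L. srg_defect L B d c m S U * N z U) = 0"
proof -
  have "(\<Sum>U\<in>L. srg_defect L B d c m S U * N z U)
      = (\<Sum>U\<in>L. (\<Sum>W\<in>L. B S W * B W U) * N z U) - d * (\<Sum>U\<in>L. B S U * N z U) - c * N z S - m * r"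
    using finite_L S z
    by (simp add: srg_defect_def left_diff_distrib sum_subtractf mult.assoc row_sum_N flip: sum_distrib_left)
  also have "\<dots> = (\<Sum>x\<in>V. N x S * (\<Sum>y\<in>V. A x y * A y z)) - d * (\<Sum>x\<in>V. N x S * A x z) - c * N z S - m * r"
    using S z by (simp add: incidence_intertwines incidence_intertwines_square)
  also have "\<dots> = (\<Sum>x\<in>V. N x S * srg_defect V A d c m x z)"
    using finite_V S z
    by (simp add: srg_defect_def right_diff_distrib sum_subtractf col_sum_N mult.left_commute[of _ d]
        mult.left_commute[of _ c] mult.commute[of _ m] flip: sum_distrib_left sum_distrib_right)
  also have "\<dots> = 0"
    using A_defect z by simp
  finally show ?thesis .
qed

lemma srg_defect_transfer:
  assumes A_defect: "\<And>x y. x \<in> V \<Longrightarrow> y \<in> V \<Longrightarrow> srg_defect V A d c m x y = 0"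
    and B_idem: "\<And>S T. S \<in> L \<Longrightarrow> T \<in> L \<Longrightarrow> B S T * B S T = B S T"
    and B_loopless: "\<And>S. S \<in> L \<Longrightarrow> B S S = 0"
    and "c + m = r * r - w" and "r \<noteq> 0"
    and S: "S \<in> L" and T: "T \<in> L"
  shows "srg_defect L B d c m S T = 0"
proof -
  let ?X = "srg_defect L B d c m"
  have sym: "?X S T = ?X T S" if "S \<in> L" "T \<in> L" for S T
  proof -
    have "(\<Sum>U\<in>L. B S U * B U T) = (\<Sum>U\<in>L. B T U * B U S)"
      using that by (intro sum.cong) (simp_all add: B_sym[of S] B_sym[of _ T])
    then show ?thesis
      using that by (simp add: srg_defect_def B_sym[of S T] eq_commute[of S T])
  qed
  have "?X S S = 0" if "S \<in> L" for S
  proof -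
    have "(\<Sum>U\<in>L. B S U * B U S) = (\<Sum>U\<in>L. B S U)"
      using that by (intro sum.cong) (simp_all add: B_sym[of _ S] B_idem)
    then show ?thesis
      using that \<open>c + m = r * r - w\<close> by (simp add: srg_defect_def row_sum_B B_loopless)
  qed
  then have trace: "(\<Sum>S\<in>L. ?X S S) = 0"
    by simp
  have rows: "(\<Sum>T\<in>L. ?X S T) = 0" if "S \<in> L" for S
  proof -
    have "(\<Sum>U\<in>L. ?X S U) * r = (\<Sum>U\<in>L. ?X S U * (\<Sum>z\<in>V. N z U))"
      by (simp add: col_sum_N sum_distrib_right)
    also have "\<dots> = (\<Sum>z\<in>V. \<Sum>U\<in>L. ?X S U * N z U)"
      by (simp add: sum_distrib_left) (rule sum.swap)
    also have "\<dots> = 0"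
      using that by (simp add: srg_defect_annihilates[OF A_defect])
    finally show ?thesis
      using \<open>r \<noteq> 0\<close> by simp
  qed
  show ?thesis
    using sym_matrix_eq_0_if_annihilates[OF finite_L sym
        srg_defect_annihilates[OF A_defect] srg_defect_decomposition trace rows S T] .
qed

end

lemma common_nbrs_eq_sum_adjacency:
  assumes "simple_graph V E"
  shows "real (common_nbrs V E x y) = (\<Sum>z\<in>V. of_bool (E x z) * of_bool (E z y))"
proof -
  have "{z\<in>V. E x z \<and> E y z} = V \<inter> {z. E x z \<and> E z y}"
    using assms by (auto simp: simple_graph_def)
  then show ?thesis
    using assms by (simp add: common_nbrs_def simple_graph_def flip: of_bool_conj)
qed

lemma srg_iff_srg_defect:
  assumes "simple_graph V E"
  shows "srg V E n k l m \<longleftrightarrow> card V = n \<and> (\<forall>x\<in>V. card {y\<in>V. E x y} = k) \<and>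
    (\<forall>x\<in>V. \<forall>y\<in>V. srg_defect V (\<lambda>x y. of_bool (E x y)) (real l - real m) (real k - real m) (real m) x y = 0)"
proof -
  have defect: "srg_defect V (\<lambda>x y. of_bool (E x y)) (real l - real m) (real k - real m) (real m) x y
      = real (common_nbrs V E x y) - (real l - real m) * of_bool (E x y) - (real k - real m) * of_bool (x = y) - real m"
    for x y
    using assms by (simp add: srg_defect_def common_nbrs_eq_sum_adjacency)
  have degree: "common_nbrs V E x x = card {y\<in>V. E x y}" for x
    by (simp add: common_nbrs_def)
  have loopless: "\<not> E x x" for x
    using assms by (simp add: simple_graph_def)
  show ?thesis
    unfolding srg_def defect using assms degree loopless
    by (auto 0 4 simp: algebra_simps)
qed

locale clique_regular_graph =
  fixes V :: "'v set" and E :: "'v \<Rightarrow> 'v \<Rightarrow> bool" and w :: nat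
  assumes simple: "simple_graph V E" and clique_regular: "clique_regular V E w"
begin

abbreviation cliques :: "'v set set" where
  "cliques \<equiv> cliques_of_order V E w"

lemma finite_V: "finite V"
  using simple by (simp add: simple_graph_def)

lemma mem_cliques:
  "S \<in> cliques \<longleftrightarrow> S \<subseteq> V \<and> finite S \<and> card S = w \<and> (\<forall>x\<in>S. \<forall>y\<in>S. x \<noteq> y \<longrightarrow> E x y)"
  by (auto simp: cliques_of_order_def clique_def)

lemma finite_cliques: "finite cliques"
proof (rule finite_subset)
  show "cliques \<subseteq> Pow V"
    by (auto simp: mem_cliques)
qed (simp add: finite_V)

lemma card_cliques_containing_pair:
  assumes "x \<noteq> y"
  shows "card {S\<in>cliques. x \<in> S \<and> y \<in> S} = of_bool (E x y)"
proof (cases "E x y")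
  case True
  then have "\<exists>!S. S \<in> cliques \<and> x \<in> S \<and> y \<in> S"
    using clique_regular by (simp add: clique_regular_def)
  then obtain S where "{S\<in>cliques. x \<in> S \<and> y \<in> S} = {S}"
    by blast
  then show ?thesis
    using True by simp
next
  case False
  then have none: "{S\<in>cliques. x \<in> S \<and> y \<in> S} = {}"
    using assms by (auto simp: mem_cliques)
  show ?thesis
    using False by (simp add: none)
qed

lemma card_clique_inter:
  assumes S: "S \<in> cliques" and T: "T \<in> cliques"
  shows "card (S \<inter> T) = of_bool (clique_graph_adj V E w S T) + w * of_bool (S = T)"
proof (cases "S = T")
  case True
  then show ?thesis
    using S by (simp add: clique_graph_adj_def mem_cliques)
next
  case False
  have fin: "finite (S \<inter> T)"
    using S by (simp add: mem_cliques)
  have "card (S \<inter> T) \<le> 1"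
  proof (rule ccontr)
    assume "\<not> card (S \<inter> T) \<le> 1"
    then obtain x y where "x \<in> S \<inter> T" "y \<in> S \<inter> T" "x \<noteq> y"
      using fin by (auto simp: card_le_Suc0_iff_eq)
    then have "card {S, T} \<le> card {U\<in>cliques. x \<in> U \<and> y \<in> U}"
      using S T finite_cliques by (intro card_mono) auto
    with card_cliques_containing_pair[OF \<open>x \<noteq> y\<close>] False show False
      by (cases "E x y") simp_all
  qed
  with fin have "card (S \<inter> T) = of_bool (S \<inter> T \<noteq> {})"
    by (auto simp: le_Suc_eq card_eq_0_iff)
  then show ?thesis
    using False S T by (simp add: clique_graph_adj_def)
qed

lemma degree_eq_card_cliques_containing:
  "card {y\<in>V. E x y} = card {S\<in>cliques. x \<in> S} * (w - 1)"
proof -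
  have "card {y\<in>V. E x y} = (\<Sum>y\<in>V. card {S\<in>cliques. x \<in> S \<and> y \<in> S \<and> y \<noteq> x})"
  proof -
    have "card {S\<in>cliques. x \<in> S \<and> y \<in> S \<and> y \<noteq> x} = of_bool (E x y)" for y
      using card_cliques_containing_pair[of x y] simple by (cases "y = x") (auto simp: simple_graph_def)
    moreover have "{y\<in>V. E x y} = V \<inter> {y. E x y}"
      by blast
    ultimately show ?thesis
      using finite_V by simp
  qed
  also have "\<dots> = (\<Sum>S\<in>cliques. card {y\<in>V. x \<in> S \<and> y \<in> S \<and> y \<noteq> x})"
    by (rule sum_multicount_gen[symmetric, OF finite_cliques finite_V]) simp
  also have "\<dots> = (\<Sum>S\<in>cliques. of_bool (x \<in> S) * (w - 1))"
  proof (intro sum.cong refl)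
    fix S assume "S \<in> cliques"
    then have "{y\<in>V. x \<in> S \<and> y \<in> S \<and> y \<noteq> x} = (if x \<in> S then S - {x} else {})"
      by (auto simp: mem_cliques)
    then show "card {y\<in>V. x \<in> S \<and> y \<in> S \<and> y \<noteq> x} = of_bool (x \<in> S) * (w - 1)"
      using \<open>S \<in> cliques\<close> by (simp add: mem_cliques)
  qed
  also have "\<dots> = card {S\<in>cliques. x \<in> S} * (w - 1)"
  proof -
    have "{S\<in>cliques. x \<in> S} = cliques \<inter> {S. x \<in> S}"
      by blast
    then show ?thesis
      using finite_cliques by (simp flip: sum_distrib_right)
  qed
  finally show ?thesis .
qed

lemma sum_card_cliques_containing: "(\<Sum>x\<in>V. card {S\<in>cliques. x \<in> S}) = card cliques * w"
proof -
  have "(\<Sum>x\<in>V. card {S\<in>cliques. x \<in> S}) = (\<Sum>S\<in>cliques. card {x\<in>V. x \<in> S})"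
    by (rule sum_multicount_gen[OF finite_V finite_cliques]) simp
  also have "\<dots> = (\<Sum>S\<in>cliques. w)"
  proof (intro sum.cong refl)
    fix S assume "S \<in> cliques"
    then have "{x\<in>V. x \<in> S} = S"
      by (auto simp: mem_cliques)
    then show "card {x\<in>V. x \<in> S} = w"
      using \<open>S \<in> cliques\<close> by (simp add: mem_cliques)
  qed
  finally show ?thesis
    by simp
qed

lemma regular_gram_pair_incidence:
  assumes r: "\<And>x. x \<in> V \<Longrightarrow> card {S\<in>cliques. x \<in> S} = w"
  shows "regular_gram_pair V cliques (\<lambda>x S. of_bool (x \<in> S)) (\<lambda>x y. of_bool (E x y))
    (\<lambda>S T. of_bool (clique_graph_adj V E w S T)) (real w) (real w)"
proof unfold_locales
  show "finite V" "finite cliques"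
    using finite_V finite_cliques by simp_all
next
  fix x y assume "x \<in> V" "y \<in> V"
  have "{S\<in>cliques. x \<in> S \<and> y \<in> S} = cliques \<inter> {S. x \<in> S \<and> y \<in> S}"
    by blast
  moreover have "\<not> E x x"
    using simple by (simp add: simple_graph_def)
  ultimately show "(\<Sum>S\<in>cliques. of_bool (x \<in> S) * of_bool (y \<in> S)) = of_bool (E x y) + real w * of_bool (x = y)"
    using finite_cliques r[OF \<open>x \<in> V\<close>] card_cliques_containing_pair[of x y]
    by (cases "x = y") (simp_all flip: of_bool_conj)
next
  fix S T assume "S \<in> cliques" "T \<in> cliques"
  then have "V \<inter> {x. x \<in> S \<and> x \<in> T} = S \<inter> T"
    by (auto simp: mem_cliques)
  then show "(\<Sum>x\<in>V. of_bool (x \<in> S) * of_bool (x \<in> T)) = of_bool (clique_graph_adj V E w S T) + real w * of_bool (S = T)"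
    using finite_V card_clique_inter[OF \<open>S \<in> cliques\<close> \<open>T \<in> cliques\<close>] by (simp flip: of_bool_conj)
next
  fix x assume "x \<in> V"
  have "{S\<in>cliques. x \<in> S} = cliques \<inter> {S. x \<in> S}"
    by blast
  then show "(\<Sum>S\<in>cliques. of_bool (x \<in> S)) = real w"
    using finite_cliques r[OF \<open>x \<in> V\<close>] by simp
next
  fix S assume "S \<in> cliques"
  then have "V \<inter> {x. x \<in> S} = S"
    by (auto simp: mem_cliques)
  then show "(\<Sum>x\<in>V. of_bool (x \<in> S)) = real w"
    using finite_V \<open>S \<in> cliques\<close> by (simp add: mem_cliques)
qed

lemma card_cliques_if_srg:
  assumes "srg V E n k l m" and "k = w * (w - 1)" and "w \<ge> 2"
  shows "\<forall>x\<in>V. card {S\<in>cliques. x \<in> S} = w" and "card cliques = n"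
proof -
  show r: "\<forall>x\<in>V. card {S\<in>cliques. x \<in> S} = w"
    using assms degree_eq_card_cliques_containing by (auto simp: srg_def)
  have "card V * w = card cliques * w"
    using sum_card_cliques_containing r by simp
  then show "card cliques = n"
    using assms(1) \<open>w \<ge> 2\<close> by (auto simp: srg_def)
qed

lemma srg_clique_graph:
  assumes srg: "srg V E n k l m" and k: "k = w * (w - 1)" and "w \<ge> 2"
  shows "srg (clique_graph_vertices V E w) (clique_graph_adj V E w) n k l m"
proof -
  interpret regular_gram_pair V cliques "\<lambda>x S. of_bool (x \<in> S)" "\<lambda>x y. of_bool (E x y)"
    "\<lambda>S T. of_bool (clique_graph_adj V E w S T)" "real w" "real w"
    using regular_gram_pair_incidence card_cliques_if_srg[OF assms] by blast
  have "simple_graph cliques (clique_graph_adj V E w)"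
    using finite_cliques by (auto simp: simple_graph_def clique_graph_adj_def)
  moreover have "card {T\<in>cliques. clique_graph_adj V E w S T} = k" if "S \<in> cliques" for S
  proof -
    have "{T\<in>cliques. clique_graph_adj V E w S T} = cliques \<inter> {T. clique_graph_adj V E w S T}"
      by blast
    then have "real (card {T\<in>cliques. clique_graph_adj V E w S T}) = real w * real w - real w"
      using row_sum_B[OF that] finite_cliques by simp
    then show ?thesis
      using k \<open>w \<ge> 2\<close> by (simp add: of_nat_diff algebra_simps flip: of_nat_mult)
  qed
  moreover have "srg_defect cliques (\<lambda>S T. of_bool (clique_graph_adj V E w S T))
      (real l - real m) (real k - real m) (real m) S T = 0" if "S \<in> cliques" "T \<in> cliques" for S T
  proof (rule srg_defect_transfer)
    show "\<And>x y. x \<in> V \<Longrightarrow> y \<in> V \<Longrightarrow> srg_defect V (\<lambda>x y. of_bool (E x y)) (real l - real m) (real k - real m) (real m) x y = 0"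
      using srg simple by (simp add: srg_iff_srg_defect)
    show "real k - real m + real m = real w * real w - real w"
      using k \<open>w \<ge> 2\<close> by (simp add: of_nat_diff algebra_simps)
  qed (use that \<open>w \<ge> 2\<close> in \<open>auto simp: clique_graph_adj_def\<close>)
  ultimately show ?thesis
    using card_cliques_if_srg[OF assms]
    by (simp add: srg_iff_srg_defect clique_graph_vertices_def)
qed

lemma degree_if_srg_clique_graph:
  assumes "srg V E n k l m" and "srg (clique_graph_vertices V E w) (clique_graph_adj V E w) n k l m"
  shows "k = w * (w - 1)"
proof -
  obtain x y where "E x y"
    using clique_regular by (auto simp: clique_regular_def)
  then have "n > 0"
    using assms(1) simple by (auto simp: srg_def simple_graph_def card_gt_0_iff)
  have "n * (w * (w - 1)) = card cliques * w * (w - 1)"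
    using assms(2) by (simp add: srg_def clique_graph_vertices_def)
  also have "\<dots> = (\<Sum>x\<in>V. card {S\<in>cliques. x \<in> S} * (w - 1))"
    by (simp add: sum_card_cliques_containing flip: sum_distrib_right)
  also have "\<dots> = (\<Sum>x\<in>V. card {y\<in>V. E x y})"
    by (simp add: degree_eq_card_cliques_containing)
  also have "\<dots> = n * k"
    using assms(1) by (simp add: srg_def)
  finally show ?thesis
    using \<open>n > 0\<close> by simp
qed

end

theorem corollary4:
  fixes V :: "'v set" and E :: "'v \<Rightarrow> 'v \<Rightarrow> bool" and w n k l m :: nat
  assumes "w \<ge> 2"
    and "simple_graph V E"
    and "clique_regular V E w"
    and "srg V E n k l m"
    and "\<not> boring V E"
  shows "srg (clique_graph_vertices V E w) (clique_graph_adj V E w) n k l m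
         \<longleftrightarrow> k = w * (w - 1)"
proof -
  interpret clique_regular_graph V E w
    using assms(2,3) by unfold_locales
  show ?thesis
    using assms(1,4) srg_clique_graph degree_if_srg_clique_graph by blast
qed

end
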